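(* For every $j\in\{1,\dots,k\}$, the exemplar mean $x_j^n$ does not converge in probability (to any random variable) as $n\to\infty$.
   Context: The $k$-means exemplar model: $E\subseteq\mathbb{R}^N$ bounded, convex, closed with non-empty interior; $P$ a probability measure on $E$ with density $f>0$ on $E$; $k\ge2$ categories; decay rate $\lambda>0$; initial means $x_1^0,\dots,x_k^0\in E$ pairwise distinct and initial weights $w_1^0,\dots,w_k^0>0$; $z_0,z_1,\dots$ i.i.d. with law $P$. For $n\ge0$, with $i$ the smallest index minimizing $|z_n-x_i^n|$: $x_i^{n+1}=\frac{x_i^n w_i^n e^{-\lambda}+z_n}{w_i^n e^{-\lambda}+1}$, $w_i^{n+1}=w_i^n e^{-\lambda}+1$, and for $j\ne i$, $x_j^{n+1}=x_j^n$, $w_j^{n+1}=w_j^n e^{-\lambda}$. *)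

theory Defs
  imports "HOL-Probability.Probability"
begin

definition winner :: "nat \<Rightarrow> 'a::metric_space \<Rightarrow> (nat \<Rightarrow> 'a) \<Rightarrow> nat" where
  "winner k z xs = (LEAST i. i \<in> {1..k} \<and> (\<forall>j\<in>{1..k}. dist z (xs i) \<le> dist z (xs j)))"

definition kme_step :: "real \<Rightarrow> nat \<Rightarrow> 'a::real_normed_vector
    \<Rightarrow> (nat \<Rightarrow> 'a) \<times> (nat \<Rightarrow> real) \<Rightarrow> (nat \<Rightarrow> 'a) \<times> (nat \<Rightarrow> real)" where
  "kme_step lam k z s =
     (let xs = fst s; ws = snd s; i = winner k z xs in
      ((\<lambda>j. if j = i then (1 / (ws j * exp (- lam) + 1)) *\<^sub>R
                            ((ws j * exp (- lam)) *\<^sub>R xs j + z)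
            else xs j),
       (\<lambda>j. if j = i then ws j * exp (- lam) + 1 else ws j * exp (- lam))))"

primrec kme_state :: "real \<Rightarrow> nat \<Rightarrow> (nat \<Rightarrow> 'a::real_normed_vector) \<Rightarrow> (nat \<Rightarrow> real)
    \<Rightarrow> (nat \<Rightarrow> 'a) \<Rightarrow> nat \<Rightarrow> (nat \<Rightarrow> 'a) \<times> (nat \<Rightarrow> real)" where
  "kme_state lam k x0 w0 zs 0 = (x0, w0)"
| "kme_state lam k x0 w0 zs (Suc n) = kme_step lam k (zs n) (kme_state lam k x0 w0 zs n)"

definition conv_in_prob :: "'b measure \<Rightarrow> (nat \<Rightarrow> 'b \<Rightarrow> 'a::metric_space) \<Rightarrow> ('b \<Rightarrow> 'a) \<Rightarrow> bool" where
  "conv_in_prob M X Y \<longleftrightarrow>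
     (\<forall>e>0. (\<lambda>n. measure M {\<omega> \<in> space M. dist (X n \<omega>) (Y \<omega>) > e}) \<longlonglongrightarrow> 0)"

end

theory Submission
  imports Defs
begin

text \<open>The weights stay bounded, so a winning mean always moves a fixed
  fraction of the way towards the stimulus. Around any \<open>p \<in> E\<close> put targets \<open>\<tau> 0, \<dots>, \<tau> (k - 1)\<close> in \<open>E\<close>
  at distances \<open>L / 3\<^sup>i\<close> from \<open>p\<close>. If the mean \<open>x\<^sub>j\<close> is near \<open>p\<close> and the next \<open>k R\<close> stimuli visit the
  targets in turn, \<open>R\<close> times each, then \<open>j\<close> has to win and its mean jumps by a fixed \<open>\<epsilon>\<close>:
  otherwise every phase would drag a new category other than \<open>j\<close> onto its target and keep it parked
  there, and there are only \<open>k - 1\<close> of them. Finitely many \<open>p\<close> cover the compact \<open>E\<close>, and the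
  future stimuli are independent of the present state and hit every ball in \<open>E\<close> with positive
  probability. Hence at every time the probability of an \<open>\<epsilon>\<close>-jump within the next \<open>k R\<close> steps is
  bounded below by a constant \<open>c > 0\<close>, whereas convergence in probability forces it to tend to 0.\<close>

lemma weighted_average_toward:
  fixes x z :: "'a::real_normed_vector"
  assumes "0 \<le> a" "a \<le> A"
  defines "y \<equiv> (1 / (a + 1)) *\<^sub>R (a *\<^sub>R x + z)"
  shows dist_weighted_average_target: "dist y z \<le> (1 - 1 / (A + 1)) * dist x z"
    and dist_weighted_average_source: "1 / (A + 1) * dist z x \<le> dist y x"
    and weighted_average_in_segment: "y \<in> closed_segment x z"
proof -
  define b where "b = 1 / (a + 1)"
  have b: "0 < b" "b \<le> 1" "1 / (A + 1) \<le> b"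
    unfolding b_def using assms(1,2) by (auto intro: divide_left_mono)
  have y: "y = (1 - b) *\<^sub>R x + b *\<^sub>R z"
    using assms(1) by (simp add: y_def b_def scaleR_add_right divide_simps)
  have "y - z = (1 - b) *\<^sub>R (x - z)" "y - x = b *\<^sub>R (z - x)"
    by (simp_all add: y algebra_simps)
  then show "dist y z \<le> (1 - 1 / (A + 1)) * dist x z" "1 / (A + 1) * dist z x \<le> dist y x"
    using b mult_right_mono[OF b(3) norm_ge_zero[of "z - x"]]
    by (simp_all add: dist_norm mult_right_mono)
  show "y \<in> closed_segment x z"
    using b y by (auto simp: closed_segment_def)
qed

lemma exists_far_point:
  fixes E :: "'a::euclidean_space set"
  assumes "interior E \<noteq> {}"
  obtains L where "0 < L" "\<And>p. \<exists>c\<in>E. L \<le> dist p c"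
proof -
  obtain c r where r: "0 < r" "ball c r \<subseteq> E"
    using assms by (meson ex_in_conv mem_interior)
  obtain b :: 'a where b: "norm b = 1"
    using norm_Basis nonempty_Basis by blast
  have e: "c + (r / 2) *\<^sub>R b \<in> E" "c - (r / 2) *\<^sub>R b \<in> E"
    using r b by (auto intro!: subsetD[OF r(2)] simp: dist_norm)
  have "dist (c + (r / 2) *\<^sub>R b) (c - (r / 2) *\<^sub>R b) = r"
    using r b by (simp add: dist_norm flip: scaleR_add_left)
  then have "r / 2 \<le> dist p (c + (r / 2) *\<^sub>R b) \<or> r / 2 \<le> dist p (c - (r / 2) *\<^sub>R b)" for p
    using dist_triangle[of "c + (r / 2) *\<^sub>R b" "c - (r / 2) *\<^sub>R b" p] by (simp add: dist_commute; linarith)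
  then have "\<exists>c\<in>E. r / 2 \<le> dist p c" for p
    using e by blast
  then show ?thesis
    using that r(1) by (meson half_gt_zero)
qed

lemma geometric_targets:
  fixes p c :: "'a::real_normed_vector"
  assumes "convex E" "p \<in> E" "c \<in> E" "0 < L" "L \<le> dist p c"
  obtains \<tau> where "\<And>i. \<tau> i \<in> E" "\<And>i. dist p (\<tau> i) = L / 3 ^ i"
    "\<And>l i. l < i \<Longrightarrow> 2 * (L / 3 ^ i) \<le> dist (\<tau> l) (\<tau> i)"
proof
  define d where "d = dist p c"
  define \<tau> where "\<tau> i = p + (L / 3 ^ i / d) *\<^sub>R (c - p)" for i :: nat
  have d: "0 < d" "norm (c - p) = d"
    using assms(4,5) by (auto simp: d_def dist_norm norm_minus_commute)
  have s: "0 < L / 3 ^ i" "L / 3 ^ i \<le> L" for i :: nat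
    using assms(4) by (auto simp: divide_simps)
  show "dist p (\<tau> i) = L / 3 ^ i" for i
    using d s[of i] by (simp add: \<tau>_def dist_norm)
  show "\<tau> i \<in> E" for i
  proof -
    have "L / 3 ^ i \<le> d"
      using s[of i] assms(5) unfolding d_def by linarith
    then have "L / 3 ^ i / d \<le> 1"
      using d(1) divide_le_eq_1_pos by blast
    moreover have "\<tau> i = (1 - L / 3 ^ i / d) *\<^sub>R p + (L / 3 ^ i / d) *\<^sub>R c"
      by (simp add: \<tau>_def algebra_simps)
    ultimately show ?thesis
      using convexD[OF assms(1-3)] s[of i] d by simp
  qed
  show "2 * (L / 3 ^ i) \<le> dist (\<tau> l) (\<tau> i)" if "l < i" for l i
  proof -
    have "(3::real) * 3 ^ l \<le> 3 ^ i"
      using power_increasing[of "Suc l" i "3::real"] that by simp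
    then have three: "3 * (L / 3 ^ i) \<le> L / 3 ^ l"
      using assms(4) by (simp add: divide_simps mult.commute)
    have "\<tau> l - \<tau> i = ((L / 3 ^ l - L / 3 ^ i) / d) *\<^sub>R (c - p)"
      by (simp add: \<tau>_def algebra_simps diff_divide_distrib)
    then have "dist (\<tau> l) (\<tau> i) = L / 3 ^ l - L / 3 ^ i"
      using d three s[of i] by (simp add: dist_norm)
    then show ?thesis
      using three by simp
  qed
qed

lemma exists_separated_targets:
  fixes E :: "'a::euclidean_space set"
  assumes "convex E" "interior E \<noteq> {}"
  obtains L \<tau> where "0 < L" "\<And>p i. p \<in> E \<Longrightarrow> \<tau> p i \<in> E" "\<And>p i. p \<in> E \<Longrightarrow> dist p (\<tau> p i) = L / 3 ^ i"
    "\<And>p l i. p \<in> E \<Longrightarrow> l < i \<Longrightarrow> 2 * (L / 3 ^ i) \<le> dist (\<tau> p l) (\<tau> p i)"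
proof -
  obtain L where L: "0 < L" "\<And>p. \<exists>c\<in>E. L \<le> dist p c"
    using exists_far_point[OF assms(2)] by blast
  have "\<exists>\<tau>. \<forall>p\<in>E. (\<forall>i. \<tau> p i \<in> E \<and> dist p (\<tau> p i) = L / 3 ^ i) \<and>
      (\<forall>l i. l < i \<longrightarrow> 2 * (L / 3 ^ i) \<le> dist (\<tau> p l) (\<tau> p i))"
  proof (intro bchoice ballI)
    fix p assume "p \<in> E"
    obtain c where "c \<in> E" "L \<le> dist p c"
      using L(2) by blast
    from geometric_targets[OF assms(1) \<open>p \<in> E\<close> this(1) L(1) this(2)]
    show "\<exists>\<tau>. (\<forall>i. \<tau> i \<in> E \<and> dist p (\<tau> i) = L / 3 ^ i) \<and>
        (\<forall>l i. l < i \<longrightarrow> 2 * (L / 3 ^ i) \<le> dist (\<tau> l) (\<tau> i))"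
      by metis
  qed
  then show thesis
    using that L(1) by blast
qed

lemma exists_power_contraction:
  fixes a D \<delta> \<eta> :: real
  assumes "0 < a" "a \<le> 1" "0 < \<delta>" "0 \<le> D" "\<eta> \<le> a * \<delta> / 4"
  obtains R where "(1 - a) ^ R * D + 2 * \<eta> / a \<le> \<delta>"
proof -
  obtain R where R: "(1 - a) ^ R < \<delta> / 2 / (D + \<delta>)"
    using real_arch_pow_inv[of "\<delta> / 2 / (D + \<delta>)" "1 - a"] assms by auto
  have "(1 - a) ^ R * D \<le> (1 - a) ^ R * (D + \<delta>)"
    using assms by (intro mult_left_mono) auto
  also have "\<dots> \<le> \<delta> / 2 / (D + \<delta>) * (D + \<delta>)"
    using R assms by (intro mult_right_mono) auto
  also have "\<dots> = \<delta> / 2"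
    using assms by (simp add: field_simps)
  finally have "(1 - a) ^ R * D \<le> \<delta> / 2" .
  moreover have "2 * \<eta> / a \<le> \<delta> / 2"
    using assms by (simp add: divide_simps mult.commute)
  ultimately show thesis
    using that[of R] by linarith
qed

lemma dist_phase_geometry:
  fixes x p c :: "'a::metric_space"
  assumes "dist x p < \<delta>" "dist p c = \<sigma>" "2 * \<eta> + \<gamma> + \<delta> < \<sigma>" "0 \<le> \<eta>"
  shows "\<gamma> < dist x c" and "dist x c < \<sigma> + \<delta>"
    and "dist y c' \<le> \<gamma> \<Longrightarrow> 2 * \<sigma> \<le> dist c' c \<Longrightarrow> dist x c + 2 * \<eta> < dist y c"
  using assms dist_triangle[of p c x] dist_triangle[of x c p] dist_triangle[of c' c y]
  by (simp_all add: dist_commute)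

lemma fst_kme_step:
  "fst (kme_step lam k z s) j =
    (if j = winner k z (fst s)
     then (1 / (snd s j * exp (- lam) + 1)) *\<^sub>R ((snd s j * exp (- lam)) *\<^sub>R fst s j + z)
     else fst s j)"
  by (simp add: kme_step_def Let_def)

lemma snd_kme_step:
  "snd (kme_step lam k z s) j =
    (if j = winner k z (fst s) then snd s j * exp (- lam) + 1 else snd s j * exp (- lam))"
  by (simp add: kme_step_def Let_def)

lemma winner_in_range_and_minimal:
  fixes xs :: "nat \<Rightarrow> 'a::metric_space"
  assumes "1 \<le> k"
  shows winner_in_range: "winner k z xs \<in> {1..k}"
    and winner_minimal: "l \<in> {1..k} \<Longrightarrow> dist z (xs (winner k z xs)) \<le> dist z (xs l)"
proof -
  have "Min ((\<lambda>l. dist z (xs l)) ` {1..k}) \<in> (\<lambda>l. dist z (xs l)) ` {1..k}"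
    using assms by (intro Min_in) auto
  then obtain i where "i \<in> {1..k}" "dist z (xs i) = Min ((\<lambda>l. dist z (xs l)) ` {1..k})"
    by auto
  then have "i \<in> {1..k} \<and> (\<forall>l\<in>{1..k}. dist z (xs i) \<le> dist z (xs l))"
    by auto
  then have "winner k z xs \<in> {1..k} \<and> (\<forall>l\<in>{1..k}. dist z (xs (winner k z xs)) \<le> dist z (xs l))"
    unfolding winner_def by (rule LeastI)
  then show "winner k z xs \<in> {1..k}" "l \<in> {1..k} \<Longrightarrow> dist z (xs (winner k z xs)) \<le> dist z (xs l)"
    by auto
qed

lemma winner_ne_if_farther:
  fixes xs :: "nat \<Rightarrow> 'a::metric_space"
  assumes "j \<in> {1..k}" "dist z (xs j) < dist z (xs l)"
  shows "winner k z xs \<noteq> l"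
  using winner_minimal[of k j z xs] assms by force

lemma kme_state_add:
  "kme_state lam k x0 w0 zs (n + m) =
   kme_state lam k (fst (kme_state lam k x0 w0 zs n)) (snd (kme_state lam k x0 w0 zs n))
     (\<lambda>i. zs (n + i)) m"
  by (induction m) auto

lemma kme_state_cong:
  "(\<And>m. m < n \<Longrightarrow> zs m = zs' m) \<Longrightarrow> kme_state lam k x0 w0 zs n = kme_state lam k x0 w0 zs' n"
  by (induction n) auto

lemma fst_kme_state_if_never_winner:
  assumes "\<And>m. m < n \<Longrightarrow> winner k (zs m) (fst (kme_state lam k x0 w0 zs m)) \<noteq> j"
  shows "fst (kme_state lam k x0 w0 zs n) j = x0 j"
  using assms by (induction n) (auto simp: fst_kme_step)

lemma fst_kme_state_unmoved:
  fixes lam :: real and k :: nat and x0 :: "nat \<Rightarrow> 'a::real_normed_vector" and w0 zs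
  defines "S \<equiv> kme_state lam k x0 w0 zs"
  assumes j: "j \<in> {1..k}"
    and j_loses: "\<And>t. t < R \<Longrightarrow> winner k (zs (T + t)) (fst (S (T + t))) \<noteq> j"
    and j_closer: "\<And>t l. t < R \<Longrightarrow> l \<in> Q \<Longrightarrow>
      dist (zs (T + t)) (fst (S T) j) < dist (zs (T + t)) (fst (S T) l)"
  shows "t \<le> R \<Longrightarrow> \<forall>l\<in>insert j Q. fst (S (T + t)) l = fst (S T) l"
proof (induction t)
  case (Suc t)
  then have t: "t < R" and unmoved: "\<forall>l\<in>insert j Q. fst (S (T + t)) l = fst (S T) l"
    by auto
  then have "\<forall>l\<in>Q. winner k (zs (T + t)) (fst (S (T + t))) \<noteq> l"
    using j_closer[OF t] by (auto intro!: winner_ne_if_farther[OF j])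
  with j_loses[OF t] unmoved show ?case
    by (auto simp: S_def fst_kme_step)
qed simp

section \<open>Escaping from a neighbourhood\<close>

definition weights_bounded :: "real \<Rightarrow> nat \<Rightarrow> (nat \<Rightarrow> 'a) \<times> (nat \<Rightarrow> real) \<Rightarrow> bool" where
  "weights_bounded W k s \<longleftrightarrow> (\<forall>i\<in>{1..k}. 0 \<le> snd s i \<and> snd s i \<le> W)"

locale kme_weight_bound =
  fixes lam :: real and k :: nat and W :: real
  assumes k_pos: "1 \<le> k" and lam_pos: "0 < lam" and W_large: "1 \<le> W * (1 - exp (- lam))"
begin

definition min_rate :: real where
  "min_rate = 1 / (W * exp (- lam) + 1)"

lemma W_pos: "0 < W"
proof (rule ccontr)
  assume "\<not> 0 < W"
  moreover have "0 < 1 - exp (- lam)"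
    using lam_pos by simp
  ultimately have "W * (1 - exp (- lam)) \<le> 0"
    by (simp add: mult_nonpos_nonneg)
  then show False
    using W_large by simp
qed

lemma min_rate_bounds: "0 < min_rate" "min_rate \<le> 1"
proof -
  have "0 \<le> W * exp (- lam)"
    using W_pos by simp
  then show "0 < min_rate" "min_rate \<le> 1"
    by (auto simp: min_rate_def divide_simps)
qed

lemma weights_bounded_kme_step:
  assumes "weights_bounded W k s"
  shows "weights_bounded W k (kme_step lam k z s)"
  unfolding weights_bounded_def
proof
  fix l assume l: "l \<in> {1..k}"
  have "0 \<le> snd s l" "snd s l \<le> W"
    using assms l by (auto simp: weights_bounded_def)
  then have "0 \<le> snd s l * exp (- lam)" "snd s l * exp (- lam) \<le> W * exp (- lam)"
    by simp_all
  moreover have "W * exp (- lam) + 1 \<le> W"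
    using W_large by (simp add: algebra_simps)
  moreover have "snd s l * exp (- lam) \<le> snd (kme_step lam k z s) l"
    "snd (kme_step lam k z s) l \<le> snd s l * exp (- lam) + 1"
    by (simp_all add: snd_kme_step)
  ultimately show "0 \<le> snd (kme_step lam k z s) l \<and> snd (kme_step lam k z s) l \<le> W"
    by linarith
qed

lemma weights_bounded_kme_state:
  "weights_bounded W k (x0, w0) \<Longrightarrow> weights_bounded W k (kme_state lam k x0 w0 zs n)"
  by (induction n) (auto intro: weights_bounded_kme_step)

lemma kme_step_winner:
  fixes s :: "(nat \<Rightarrow> 'a::real_normed_vector) \<times> (nat \<Rightarrow> real)" and z :: 'a
  assumes "weights_bounded W k s"
  defines "i \<equiv> winner k z (fst s)"
  shows kme_step_winner_toward: "dist (fst (kme_step lam k z s) i) z \<le> (1 - min_rate) * dist (fst s i) z"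
    and kme_step_winner_moves: "min_rate * dist z (fst s i) \<le> dist (fst (kme_step lam k z s) i) (fst s i)"
    and kme_step_winner_in_segment: "fst (kme_step lam k z s) i \<in> closed_segment (fst s i) z"
proof -
  have "0 \<le> snd s i" "snd s i \<le> W"
    using assms winner_in_range[OF k_pos, of z "fst s"] by (auto simp: weights_bounded_def i_def)
  then have "0 \<le> snd s i * exp (- lam)" "snd s i * exp (- lam) \<le> W * exp (- lam)"
    by simp_all
  note weighted_average_toward[OF this, where x = "fst s i" and z = z]
  moreover have "fst (kme_step lam k z s) i =
      (1 / (snd s i * exp (- lam) + 1)) *\<^sub>R ((snd s i * exp (- lam)) *\<^sub>R fst s i + z)"
    by (simp add: fst_kme_step i_def)
  ultimately show "dist (fst (kme_step lam k z s) i) z \<le> (1 - min_rate) * dist (fst s i) z"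
    "min_rate * dist z (fst s i) \<le> dist (fst (kme_step lam k z s) i) (fst s i)"
    "fst (kme_step lam k z s) i \<in> closed_segment (fst s i) z"
    unfolding min_rate_def by simp_all
qed

lemma fst_kme_state_in_convex:
  fixes x0 :: "nat \<Rightarrow> 'a::real_normed_vector"
  assumes "weights_bounded W k (x0, w0)" "convex E"
    and "\<And>i. i \<in> {1..k} \<Longrightarrow> x0 i \<in> E" "\<And>m. m < n \<Longrightarrow> zs m \<in> E"
    and "i \<in> {1..k}"
  shows "fst (kme_state lam k x0 w0 zs n) i \<in> E"
  using assms(4,5)
proof (induction n arbitrary: i)
  case (Suc n)
  let ?s = "kme_state lam k x0 w0 zs n"
  have "closed_segment (fst ?s i) (zs n) \<subseteq> E"
    using Suc assms(2) by (intro closed_segment_subset) auto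
  then show ?case
    using kme_step_winner_in_segment[OF weights_bounded_kme_state[OF assms(1)], of "zs n" zs n] Suc
    by (auto simp: fst_kme_step)
qed (use assms(3) in simp)

lemma AE_fst_kme_state_in:
  fixes x0 :: "nat \<Rightarrow> 'a::real_normed_vector"
  assumes "weights_bounded W k (x0, w0)" "convex E" "\<And>i. i \<in> {1..k} \<Longrightarrow> x0 i \<in> E"
    and "\<And>m. AE \<omega> in M. z m \<omega> \<in> E" "i \<in> {1..k}"
  shows "AE \<omega> in M. fst (kme_state lam k x0 w0 (\<lambda>m. z m \<omega>) n) i \<in> E"
proof -
  have "AE \<omega> in M. \<forall>m. z m \<omega> \<in> E"
    using assms(4) by (simp add: AE_all_countable)
  then show ?thesis
    by eventually_elim (rule fst_kme_state_in_convex[OF assms(1-3) _ assms(5)], auto)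
qed

lemma kme_step_winner_near:
  fixes s :: "(nat \<Rightarrow> 'a::real_normed_vector) \<times> (nat \<Rightarrow> real)"
  assumes "weights_bounded W k s" "q \<in> {1..k}"
  shows "dist (fst (kme_step lam k z s) (winner k z (fst s))) c
    \<le> (1 - min_rate) * (dist (fst s q) c + dist z c) + dist z c"
proof -
  let ?w = "winner k z (fst s)"
  have "dist (fst (kme_step lam k z s) ?w) c \<le> dist (fst (kme_step lam k z s) ?w) z + dist z c"
    by (rule dist_triangle)
  also have "dist (fst (kme_step lam k z s) ?w) z \<le> (1 - min_rate) * dist (fst s ?w) z"
    using kme_step_winner_toward[OF assms(1)] .
  also have "dist (fst s ?w) z \<le> dist (fst s q) c + dist z c"
    using winner_minimal[OF k_pos assms(2), of z "fst s"] dist_triangle[of "fst s q" z c]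
    by (simp add: dist_commute)
  finally show ?thesis
    using min_rate_bounds by (simp add: mult_left_mono)
qed

lemma kme_state_approach:
  fixes x0 :: "nat \<Rightarrow> 'a::real_normed_vector" and w0 zs
  defines "S \<equiv> kme_state lam k x0 w0 zs"
  assumes "weights_bounded W k (x0, w0)" "q \<in> {1..k}" "0 \<le> \<eta>"
    and near: "\<And>t. t < R \<Longrightarrow> dist (zs (T + t)) c \<le> \<eta>"
  shows "\<exists>q'\<in>{1..k}. dist (fst (S (T + R)) q') c
    \<le> (1 - min_rate) ^ R * dist (fst (S T) q) c + 2 * \<eta> / min_rate"
  using near
proof (induction R)
  case 0
  show ?case
    using assms(3,4) min_rate_bounds by (intro bexI[of _ q]) auto
next
  case (Suc R)
  let ?b = "(1 - min_rate) ^ R * dist (fst (S T) q) c + 2 * \<eta> / min_rate"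
  obtain q' where q': "q' \<in> {1..k}" "dist (fst (S (T + R)) q') c \<le> ?b"
    using Suc by auto
  have \<eta>: "dist (zs (T + R)) c \<le> \<eta>"
    using Suc by simp
  let ?w = "winner k (zs (T + R)) (fst (S (T + R)))"
  have "dist (fst (S (T + Suc R)) ?w) c
      \<le> (1 - min_rate) * (dist (fst (S (T + R)) q') c + dist (zs (T + R)) c) + dist (zs (T + R)) c"
    unfolding S_def using kme_step_winner_near[OF weights_bounded_kme_state[OF assms(2)] q'(1)]
    by simp
  also have "\<dots> \<le> (1 - min_rate) * (?b + \<eta>) + \<eta>"
    using q'(2) \<eta> min_rate_bounds by (intro add_mono mult_left_mono) auto
  also have "\<dots> \<le> (1 - min_rate) ^ Suc R * dist (fst (S T) q) c + 2 * \<eta> / min_rate"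
    using min_rate_bounds assms(4) by (simp add: algebra_simps diff_divide_distrib)
  finally show ?case
    using winner_in_range[OF k_pos] by blast
qed

text \<open>In a phase whose stimuli are close to \<open>c\<close>, the mean of \<open>j\<close> is nearer to every stimulus than
  the parked means in \<open>Q\<close>, so these never win and stay put.\<close>

lemma kme_state_phase:
  fixes x0 :: "nat \<Rightarrow> 'a::real_normed_vector" and w0 zs
  defines "S \<equiv> kme_state lam k x0 w0 zs"
  assumes bounded: "weights_bounded W k (x0, w0)" and j: "j \<in> {1..k}" and "0 \<le> \<eta>"
    and j_loses: "\<And>t. t < R \<Longrightarrow> winner k (zs (T + t)) (fst (S (T + t))) \<noteq> j"
    and near: "\<And>t. t < R \<Longrightarrow> dist (zs (T + t)) c < \<eta>"
    and j_far: "\<gamma> < dist (fst (S T) j) c"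
    and j_start: "(1 - min_rate) ^ R * dist (fst (S T) j) c + 2 * \<eta> / min_rate \<le> \<gamma>"
    and Q_farther: "\<And>l. l \<in> Q \<Longrightarrow> dist (fst (S T) j) c + 2 * \<eta> < dist (fst (S T) l) c"
  shows "\<forall>l\<in>Q. fst (S (T + R)) l = fst (S T) l"
    and "\<exists>q\<in>{1..k} - insert j Q. dist (fst (S (T + R)) q) c \<le> \<gamma>"
proof -
  have "dist (zs (T + t)) (fst (S T) j) < dist (zs (T + t)) (fst (S T) l)"
    if "t < R" "l \<in> Q" for t l
    using near[OF that(1)] Q_farther[OF that(2)]
      dist_triangle[of "zs (T + t)" "fst (S T) j" c] dist_triangle[of "fst (S T) l" c "zs (T + t)"]
    by (simp add: dist_commute)
  then have unmoved: "\<forall>l\<in>insert j Q. fst (S (T + R)) l = fst (S T) l"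
    unfolding S_def using j_loses unfolding S_def
    by (intro fst_kme_state_unmoved[OF j, where R = R and t = R and T = T]) auto
  then show "\<forall>l\<in>Q. fst (S (T + R)) l = fst (S T) l"
    by blast
  have "\<And>t. t < R \<Longrightarrow> dist (zs (T + t)) c \<le> \<eta>"
    using near less_imp_le by blast
  from kme_state_approach[where zs = zs and R = R and T = T and c = c, OF bounded j \<open>0 \<le> \<eta>\<close> this]
  obtain q where q: "q \<in> {1..k}"
    "dist (fst (S (T + R)) q) c \<le> (1 - min_rate) ^ R * dist (fst (S T) j) c + 2 * \<eta> / min_rate"
    unfolding S_def by blast
  with j_start have q: "q \<in> {1..k}" "dist (fst (S (T + R)) q) c \<le> \<gamma>"
    by auto
  moreover have "q \<notin> insert j Q"
    using unmoved q(2) j_far Q_farther \<open>0 \<le> \<eta>\<close> by fastforce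
  ultimately show "\<exists>q\<in>{1..k} - insert j Q. dist (fst (S (T + R)) q) c \<le> \<gamma>"
    by blast
qed

lemma kme_state_parks:
  fixes x0 :: "nat \<Rightarrow> 'a::real_normed_vector" and w0 zs and \<tau> :: "nat \<Rightarrow> 'a"
  defines "S \<equiv> kme_state lam k x0 w0 zs"
  assumes bounded: "weights_bounded W k (x0, w0)" and j: "j \<in> {1..k}"
    and j_loses: "\<And>m. m < k * R \<Longrightarrow> winner k (zs m) (fst (S m)) \<noteq> j"
    and x_near_p: "dist (x0 j) p < \<delta>"
    and target_dist: "\<And>i. i < k \<Longrightarrow> dist p (\<tau> i) = \<sigma> i"
    and targets_apart: "\<And>l i. l < i \<Longrightarrow> i < k \<Longrightarrow> 2 * \<sigma> i \<le> dist (\<tau> l) (\<tau> i)"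
    and \<sigma>_lower: "\<And>i. i < k \<Longrightarrow> \<sigma>\<^sub>0 \<le> \<sigma> i" and \<sigma>_upper: "\<And>i. i < k \<Longrightarrow> \<sigma> i \<le> D"
    and gap: "2 * \<eta> + \<gamma> + \<delta> < \<sigma>\<^sub>0" and \<eta>: "0 \<le> \<eta>"
    and contraction: "(1 - min_rate) ^ R * (D + \<delta>) + 2 * \<eta> / min_rate \<le> \<gamma>"
    and near: "\<And>m. m < k * R \<Longrightarrow> dist (zs m) (\<tau> (m div R)) < \<eta>"
  shows "i \<le> k \<Longrightarrow> \<exists>P. inj_on P {..<i} \<and> P ` {..<i} \<subseteq> {1..k} - {j} \<and>
    (\<forall>l<i. dist (fst (S (i * R)) (P l)) (\<tau> l) \<le> \<gamma>)"
proof (induction i)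
  case (Suc i)
  then have i: "i < k" by simp
  obtain P where P: "inj_on P {..<i}" "P ` {..<i} \<subseteq> {1..k} - {j}"
    "\<And>l. l < i \<Longrightarrow> dist (fst (S (i * R)) (P l)) (\<tau> l) \<le> \<gamma>"
    using Suc by auto
  have "Suc i * R \<le> k * R"
    using i by (intro mult_right_mono) auto
  then have iR: "i * R + t < k * R" if "t < R" for t
    using that by simp
  have "i * R \<le> k * R"
    using i by simp
  then have x: "fst (S (i * R)) j = x0 j"
    using j_loses less_le_trans unfolding S_def by (intro fst_kme_state_if_never_winner) blast
  note geometry = dist_phase_geometry[OF x_near_p target_dist[OF i] _ \<eta>]
  have gap_i: "2 * \<eta> + \<gamma> + \<delta> < \<sigma> i"
    using gap \<sigma>_lower[OF i] by linarith
  have "(1 - min_rate) ^ R * dist (x0 j) (\<tau> i) \<le> (1 - min_rate) ^ R * (D + \<delta>)"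
    using geometry(2)[OF gap_i] \<sigma>_upper[OF i] min_rate_bounds by (intro mult_left_mono) auto
  then have j_start: "(1 - min_rate) ^ R * dist (fst (S (i * R)) j) (\<tau> i) + 2 * \<eta> / min_rate \<le> \<gamma>"
    unfolding x using contraction by linarith
  have parked_farther: "dist (fst (S (i * R)) j) (\<tau> i) + 2 * \<eta> < dist (fst (S (i * R)) l) (\<tau> i)"
    if "l \<in> P ` {..<i}" for l
    using that P(3) geometry(3)[OF gap_i _ targets_apart[OF _ i]] unfolding x by blast
  have near_i: "dist (zs (i * R + t)) (\<tau> i) < \<eta>" if "t < R" for t
    using near[OF iR[OF that]] that by simp
  note phase = kme_state_phase[OF bounded j \<eta> j_loses[OF iR, unfolded S_def] near_i
      geometry(1)[OF gap_i, folded x, unfolded S_def] j_start[unfolded S_def]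
      parked_farther[unfolded S_def], folded S_def]
  obtain q where q: "q \<in> {1..k} - insert j (P ` {..<i})" "dist (fst (S (i * R + R)) q) (\<tau> i) \<le> \<gamma>"
    using phase(2) by blast
  have "inj_on (P(i := q)) {..<Suc i}"
    using P(1) q(1) by (auto simp: lessThan_Suc inj_on_def)
  moreover have "P(i := q) ` {..<Suc i} \<subseteq> {1..k} - {j}"
    using P(2) q(1) by (auto simp: lessThan_Suc)
  moreover have "\<forall>l<Suc i. dist (fst (S (Suc i * R)) ((P(i := q)) l)) (\<tau> l) \<le> \<gamma>"
    using P(3) q(2) phase(1) by (auto simp: less_Suc_eq add.commute)
  ultimately show ?case
    by blast
qed simp

lemma kme_state_escapes:
  fixes x0 :: "nat \<Rightarrow> 'a::real_normed_vector" and w0 zs and \<tau> :: "nat \<Rightarrow> 'a"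
  defines "S \<equiv> kme_state lam k x0 w0 zs"
  assumes bounded: "weights_bounded W k (x0, w0)" and j: "j \<in> {1..k}"
    and x_near_p: "dist (x0 j) p < \<delta>"
    and target_dist: "\<And>i. i < k \<Longrightarrow> dist p (\<tau> i) = \<sigma> i"
    and targets_apart: "\<And>l i. l < i \<Longrightarrow> i < k \<Longrightarrow> 2 * \<sigma> i \<le> dist (\<tau> l) (\<tau> i)"
    and \<sigma>_lower: "\<And>i. i < k \<Longrightarrow> \<sigma>\<^sub>0 \<le> \<sigma> i" and \<sigma>_upper: "\<And>i. i < k \<Longrightarrow> \<sigma> i \<le> D"
    and gap: "2 * \<eta> + \<gamma> + \<delta> < \<sigma>\<^sub>0" and \<eta>: "0 \<le> \<eta>"
    and contraction: "(1 - min_rate) ^ R * (D + \<delta>) + 2 * \<eta> / min_rate \<le> \<gamma>"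
    and near: "\<And>m. m < k * R \<Longrightarrow> dist (zs m) (\<tau> (m div R)) < \<eta>"
  shows "\<exists>m<k * R. min_rate * (\<sigma>\<^sub>0 - \<eta> - \<delta>) \<le> dist (fst (S (Suc m)) j) (x0 j)"
proof -
  define wins where "wins m \<longleftrightarrow> m < k * R \<and> winner k (zs m) (fst (S m)) = j" for m
  have "\<exists>m. wins m"
  proof (rule ccontr)
    \<comment> \<open>otherwise all \<open>k\<close> phases park distinct categories other than \<open>j\<close>\<close>
    assume "\<nexists>m. wins m"
    then have "\<And>m. m < k * R \<Longrightarrow> winner k (zs m) (fst (kme_state lam k x0 w0 zs m)) \<noteq> j"
      unfolding wins_def S_def by blast
    from kme_state_parks[OF bounded j this x_near_p target_dist targets_apart
        \<sigma>_lower \<sigma>_upper gap \<eta> contraction near order_refl]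
    obtain P where "inj_on P {..<k}" "P ` {..<k} \<subseteq> {1..k} - {j}"
      by blast
    then have "card {..<k} \<le> card ({1..k} - {j})"
      by (intro card_inj_on_le) auto
    then show False
      using j by auto
  qed
  define m where "m = (LEAST m. wins m)"
  have m: "m < k * R" "winner k (zs m) (fst (S m)) = j"
    using LeastI_ex[OF \<open>\<exists>m. wins m\<close>] unfolding m_def wins_def by auto
  have "winner k (zs m') (fst (S m')) \<noteq> j" if "m' < m" for m'
  proof -
    have "\<not> wins m'"
      using not_less_Least[of m' wins] that unfolding m_def by blast
    then show ?thesis
      using that m(1) unfolding wins_def by auto
  qed
  then have x: "fst (S m) j = x0 j"
    unfolding S_def by (rule fst_kme_state_if_never_winner)
  have i: "m div R < k"
    using m(1) by (simp add: less_mult_imp_div_less)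
  have "\<sigma>\<^sub>0 \<le> dist p (x0 j) + dist (x0 j) (zs m) + dist (zs m) (\<tau> (m div R))"
    using \<sigma>_lower[OF i] target_dist[OF i] dist_triangle[of p "\<tau> (m div R)" "x0 j"]
      dist_triangle[of "x0 j" "\<tau> (m div R)" "zs m"]
    by linarith
  then have "\<sigma>\<^sub>0 - \<eta> - \<delta> \<le> dist (zs m) (x0 j)"
    using x_near_p near[OF m(1)] by (simp add: dist_commute)
  then have "min_rate * (\<sigma>\<^sub>0 - \<eta> - \<delta>) \<le> min_rate * dist (zs m) (x0 j)"
    using min_rate_bounds by (simp add: mult_left_mono)
  also have "\<dots> \<le> dist (fst (S (Suc m)) j) (x0 j)"
    using kme_step_winner_moves[OF weights_bounded_kme_state[OF bounded], of "zs m" zs m] m(2) x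
    by (simp add: S_def)
  finally show ?thesis
    using m(1) by blast
qed

lemma kme_escape_pattern:
  fixes E :: "'a::euclidean_space set"
  assumes "convex E" "interior E \<noteq> {}" "j \<in> {1..k}"
  obtains \<epsilon> \<delta> \<eta> \<tau> K where "0 < \<epsilon>" "0 < \<delta>" "0 < \<eta>" "\<And>p m. p \<in> E \<Longrightarrow> \<tau> p m \<in> E"
    "\<And>x0 w0 zs n p. weights_bounded W k (x0, w0) \<Longrightarrow> p \<in> E \<Longrightarrow>
      dist (fst (kme_state lam k x0 w0 zs n) j) p < \<delta> \<Longrightarrow>
      (\<And>m. m < K \<Longrightarrow> dist (zs (n + m)) (\<tau> p m) < \<eta>) \<Longrightarrow>
      \<exists>m\<le>K. \<epsilon> \<le> dist (fst (kme_state lam k x0 w0 zs (n + m)) j) (fst (kme_state lam k x0 w0 zs n) j)"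
proof -
  obtain L \<tau> where L: "0 < L" and \<tau>: "\<And>p i. p \<in> E \<Longrightarrow> \<tau> p i \<in> E"
    "\<And>p i. p \<in> E \<Longrightarrow> dist p (\<tau> p i) = L / 3 ^ i"
    "\<And>p l i. p \<in> E \<Longrightarrow> l < i \<Longrightarrow> 2 * (L / 3 ^ i) \<le> dist (\<tau> p l) (\<tau> p i)"
    using exists_separated_targets[OF assms(1,2)] by blast
  define \<sigma>\<^sub>0 where "\<sigma>\<^sub>0 = L / 3 ^ (k - 1)"
  define \<delta> where "\<delta> = \<sigma>\<^sub>0 / 8"
  define \<eta> where "\<eta> = min (\<sigma>\<^sub>0 / 8) (min_rate * \<delta> / 4)"
  have pos: "0 < \<sigma>\<^sub>0" "0 < \<delta>" "0 < \<eta>"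
    using L min_rate_bounds by (auto simp: \<sigma>\<^sub>0_def \<delta>_def \<eta>_def)
  have \<sigma>_lower: "\<sigma>\<^sub>0 \<le> L / 3 ^ i" if "i < k" for i
    using that L unfolding \<sigma>\<^sub>0_def by (intro divide_left_mono power_increasing) auto
  have \<sigma>_upper: "L / 3 ^ i \<le> L" for i :: nat
    using L by (simp add: divide_simps)
  have gap: "2 * \<eta> + \<delta> + \<delta> < \<sigma>\<^sub>0"
    using pos unfolding \<eta>_def \<delta>_def by linarith
  have "0 \<le> L + \<delta>" "\<eta> \<le> min_rate * \<delta> / 4"
    using L pos by (auto simp: \<eta>_def)
  then obtain R where contraction: "(1 - min_rate) ^ R * (L + \<delta>) + 2 * \<eta> / min_rate \<le> \<delta>"
    by (rule exists_power_contraction[OF min_rate_bounds pos(2)])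
  show ?thesis
  proof (rule that[of "min_rate * (\<sigma>\<^sub>0 - \<eta> - \<delta>)" \<delta> \<eta> "\<lambda>p m. \<tau> p (m div R)" "k * R"])
    show "0 < min_rate * (\<sigma>\<^sub>0 - \<eta> - \<delta>)"
      using min_rate_bounds gap pos by simp
    fix x0 w0 zs n p
    assume bounded: "weights_bounded W k (x0, w0)" and p: "p \<in> E"
      and start: "dist (fst (kme_state lam k x0 w0 zs n) j) p < \<delta>"
      and near: "\<And>m. m < k * R \<Longrightarrow> dist (zs (n + m)) (\<tau> p (m div R)) < \<eta>"
    let ?s = "kme_state lam k x0 w0 zs n"
    have "weights_bounded W k (fst ?s, snd ?s)"
      using weights_bounded_kme_state[OF bounded] by simp
    from kme_state_escapes[where \<sigma> = "\<lambda>i. L / 3 ^ i" and \<tau> = "\<tau> p" and \<gamma> = \<delta> and R = R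
        and zs = "\<lambda>m. zs (n + m)" and \<sigma>\<^sub>0 = \<sigma>\<^sub>0 and D = L and \<eta> = \<eta>,
        OF this assms(3) start \<tau>(2,3)[OF p] \<sigma>_lower \<sigma>_upper gap less_imp_le[OF pos(3)] contraction near]
    obtain m where "m < k * R"
      "min_rate * (\<sigma>\<^sub>0 - \<eta> - \<delta>) \<le> dist (fst (kme_state lam k x0 w0 zs (n + Suc m)) j) (fst ?s j)"
      unfolding kme_state_add by blast
    then show "\<exists>m\<le>k * R. min_rate * (\<sigma>\<^sub>0 - \<eta> - \<delta>) \<le> dist (fst (kme_state lam k x0 w0 zs (n + m)) j) (fst ?s j)"
      by (intro exI[of _ "Suc m"]) simp
  qed (use pos \<tau>(1) in auto)
qed

end

section \<open>Probabilistic preliminaries\<close>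

lemma measurable_winner[measurable]:
  fixes z :: "'b \<Rightarrow> 'a::euclidean_space"
  assumes [measurable]: "z \<in> borel_measurable N" "\<And>l. (\<lambda>\<omega>. xs \<omega> l) \<in> borel_measurable N"
  shows "(\<lambda>\<omega>. winner k (z \<omega>) (xs \<omega>)) \<in> measurable N (count_space UNIV)"
  unfolding winner_def by measurable

lemma measurable_kme_state:
  fixes \<zeta> :: "nat \<Rightarrow> 'b \<Rightarrow> 'a::euclidean_space"
  assumes "\<And>m. m < n \<Longrightarrow> \<zeta> m \<in> borel_measurable N"
  shows "(\<lambda>\<omega>. fst (kme_state lam k x0 w0 (\<lambda>m. \<zeta> m \<omega>) n) i) \<in> borel_measurable N \<and>
    (\<lambda>\<omega>. snd (kme_state lam k x0 w0 (\<lambda>m. \<zeta> m \<omega>) n) i) \<in> borel_measurable N"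
  using assms
proof (induction n arbitrary: i)
  case (Suc n)
  have [measurable]: "\<And>l. (\<lambda>\<omega>. fst (kme_state lam k x0 w0 (\<lambda>m. \<zeta> m \<omega>) n) l) \<in> borel_measurable N"
     "\<And>l. (\<lambda>\<omega>. snd (kme_state lam k x0 w0 (\<lambda>m. \<zeta> m \<omega>) n) l) \<in> borel_measurable N"
     "\<zeta> n \<in> borel_measurable N"
    using Suc by auto
  show ?case
    unfolding kme_state.simps fst_kme_step snd_kme_step by measurable
qed simp

lemma distributed_AE_in:
  fixes X :: "'w \<Rightarrow> 'a::euclidean_space"
  assumes "distributed M lborel X (\<lambda>x. ennreal (f x))" "closed E" "\<And>x. x \<notin> E \<Longrightarrow> f x = 0"
  shows "AE \<omega> in M. X \<omega> \<in> E"
proof -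
  have "emeasure M (X -` (- E) \<inter> space M) = (\<integral>\<^sup>+ x. ennreal (f x) * indicator (- E) x \<partial>lborel)"
    using assms(1,2) by (intro distributed_emeasure) auto
  also have "(\<lambda>x. ennreal (f x) * indicator (- E) x) = (\<lambda>x. 0)"
    using assms(3) by (auto simp: indicator_def fun_eq_iff)
  finally show ?thesis
    using distributed_measurable[OF assms(1)] assms(2)
    by (subst AE_iff_measurable[of "X -` (- E) \<inter> space M"]) auto
qed

lemma nn_integral_ball_pos:
  fixes f :: "'a::euclidean_space \<Rightarrow> real"
  assumes "(\<lambda>x. ennreal (f x)) \<in> borel_measurable borel" "0 < r" "\<And>x. x \<in> ball y r \<Longrightarrow> 0 < f x"
  shows "0 < (\<integral>\<^sup>+ x. ennreal (f x) * indicator (ball y r) x \<partial>lborel)"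
proof -
  have "emeasure lborel (ball y r) \<noteq> 0"
    using assms(2) by (simp add: emeasure_ball less_imp_neq[symmetric])
  then have "\<not> (AE x in lborel. x \<notin> ball y r)"
    by (subst AE_iff_null_sets[symmetric]) (auto simp: null_sets_def)
  moreover have "AE x in lborel. x \<notin> ball y r"
    if "(\<integral>\<^sup>+ x. ennreal (f x) * indicator (ball y r) x \<partial>lborel) = 0"
  proof -
    have "AE x in lborel. ennreal (f x) * indicator (ball y r) x = 0"
      using that assms(1)
      by (subst (asm) nn_integral_0_iff_AE) (auto intro!: borel_measurable_times_ennreal borel_measurable_indicator)
    then show ?thesis
      by eventually_elim (use assms(3) in \<open>force simp: indicator_def\<close>)
  qed
  ultimately show ?thesis
    by (auto simp: zero_less_iff_neq_zero)
qed

lemma distributed_ball_pos: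
  fixes X :: "'w \<Rightarrow> 'a::euclidean_space"
  assumes D: "distributed M lborel X (\<lambda>x. ennreal (f x))" and "convex E" "interior E \<noteq> {}"
    and f_pos: "\<And>x. x \<in> E \<Longrightarrow> 0 < f x" and "t \<in> E" "0 < \<eta>"
  shows "0 < emeasure M (X -` ball t \<eta> \<inter> space M)"
proof -
  have "t \<in> closure (interior E)"
    using convex_closure_interior[OF assms(2,3)] assms(5) closure_subset by blast
  then obtain y where y: "y \<in> interior E" "dist y t < \<eta>"
    using closure_approachable assms(6) by blast
  obtain r where r: "0 < r" "ball y r \<subseteq> interior E"
    using y(1) open_interior open_contains_ball by blast
  define r' where "r' = min r (\<eta> - dist y t)"
  have "ball y r' \<subseteq> ball t \<eta>"
  proof
    fix x assume "x \<in> ball y r'"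
    then show "x \<in> ball t \<eta>"
      using dist_triangle[of t x y] by (simp add: r'_def dist_commute)
  qed
  moreover have "ball y r' \<subseteq> E"
    using r interior_subset by (fastforce simp: r'_def)
  moreover have "0 < r'"
    using r y by (simp add: r'_def)
  ultimately have "0 < (\<integral>\<^sup>+ x. ennreal (f x) * indicator (ball y r') x \<partial>lborel)"
    using distributed_borel_measurable[OF D] f_pos by (intro nn_integral_ball_pos) auto
  also have "\<dots> \<le> (\<integral>\<^sup>+ x. ennreal (f x) * indicator (ball t \<eta>) x \<partial>lborel)"
    using \<open>ball y r' \<subseteq> ball t \<eta>\<close> by (intro nn_integral_mono) (auto simp: indicator_def)
  also have "\<dots> = emeasure M (X -` ball t \<eta> \<inter> space M)"
    by (rule distributed_emeasure[OF D, symmetric]) auto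
  finally show ?thesis .
qed

lemma conv_in_prob_increments_vanish:
  fixes X :: "nat \<Rightarrow> 'w \<Rightarrow> 'a::{metric_space, second_countable_topology}"
  assumes "prob_space M" "conv_in_prob M X Y"
    and [measurable]: "\<And>n. X n \<in> borel_measurable M" "Y \<in> borel_measurable M"
    and "0 < \<epsilon>"
  shows "(\<lambda>n. measure M {\<omega> \<in> space M. \<exists>m\<le>K. \<epsilon> \<le> dist (X (n + m) \<omega>) (X n \<omega>)}) \<longlonglongrightarrow> 0"
proof -
  interpret prob_space M by fact
  define far where "far n = {\<omega> \<in> space M. \<epsilon> / 4 < dist (X n \<omega>) (Y \<omega>)}" for n
  have far_events [measurable]: "far n \<in> events" for n
    unfolding far_def by measurable
  have cover: "{\<omega> \<in> space M. \<exists>m\<le>K. \<epsilon> \<le> dist (X (n + m) \<omega>) (X n \<omega>)} \<subseteq> (\<Union>m\<le>K. far (n + m))" for n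
  proof clarify
    fix \<omega> m assume "\<omega> \<in> space M" "m \<le> K" "\<epsilon> \<le> dist (X (n + m) \<omega>) (X n \<omega>)"
    moreover have "dist (X (n + m) \<omega>) (X n \<omega>) \<le> dist (X (n + m) \<omega>) (Y \<omega>) + dist (X (n + 0) \<omega>) (Y \<omega>)"
      by (simp add: dist_triangle2)
    ultimately have "\<omega> \<in> far (n + m) \<or> \<omega> \<in> far (n + 0)"
      using \<open>0 < \<epsilon>\<close> unfolding far_def by auto
    then show "\<omega> \<in> (\<Union>m\<le>K. far (n + m))"
      using \<open>m \<le> K\<close> by blast
  qed
  have bound: "measure M {\<omega> \<in> space M. \<exists>m\<le>K. \<epsilon> \<le> dist (X (n + m) \<omega>) (X n \<omega>)}
      \<le> (\<Sum>m\<le>K. prob (far (n + m)))" for n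
  proof -
    have "measure M {\<omega> \<in> space M. \<exists>m\<le>K. \<epsilon> \<le> dist (X (n + m) \<omega>) (X n \<omega>)}
        \<le> prob (\<Union>m\<le>K. far (n + m))"
      using cover by (rule finite_measure_mono) auto
    also have "\<dots> \<le> (\<Sum>m\<le>K. prob (far (n + m)))"
      by (rule finite_measure_subadditive_finite) auto
    finally show ?thesis .
  qed
  have sum_lim: "(\<lambda>n. \<Sum>m\<le>K. prob (far (n + m))) \<longlonglongrightarrow> (\<Sum>m\<le>K. 0)"
  proof (intro tendsto_sum)
    fix m
    have "(\<lambda>n. prob (far n)) \<longlonglongrightarrow> 0"
      using assms(2)[unfolded conv_in_prob_def, rule_format, of "\<epsilon> / 4"] \<open>0 < \<epsilon>\<close>
      unfolding far_def by simp
    then show "(\<lambda>n. prob (far (n + m))) \<longlonglongrightarrow> 0"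
      by (rule LIMSEQ_ignore_initial_segment)
  qed
  show ?thesis
    by (rule tendsto_sandwich[OF _ _ tendsto_const sum_lim[unfolded sum.neutral_const]]) (use bound in auto)
qed

lemma (in prob_space) exists_prob_ge_inverse_card:
  assumes "finite F" "F \<noteq> {}" "\<And>p. p \<in> F \<Longrightarrow> A p \<in> events" "AE \<omega> in M. \<exists>p\<in>F. \<omega> \<in> A p"
  obtains p where "p \<in> F" "1 / card F \<le> prob (A p)"
proof -
  have "\<exists>p\<in>F. 1 / card F \<le> prob (A p)"
  proof (rule ccontr)
    assume "\<not> ?thesis"
    then have small: "prob (A p) < 1 / card F" if "p \<in> F" for p
      using that by (meson not_le)
    have "prob (space M) \<le> prob (\<Union>p\<in>F. A p)"
    proof (rule finite_measure_mono_AE)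
      show "AE \<omega> in M. \<omega> \<in> space M \<longrightarrow> \<omega> \<in> (\<Union>p\<in>F. A p)"
        using assms(4) by eventually_elim blast
    qed (use assms(1,3) in auto)
    then have "1 \<le> prob (\<Union>p\<in>F. A p)"
      by (simp add: prob_space)
    also have "\<dots> \<le> (\<Sum>p\<in>F. prob (A p))"
      using assms by (intro finite_measure_subadditive_finite) auto
    also have "\<dots> < (\<Sum>p\<in>F. 1 / card F)"
      using assms(1,2) small by (intro sum_strict_mono) auto
    finally show False
      using assms(1,2) by simp
  qed
  then show thesis
    using that by blast
qed

lemma (in prob_space) prob_ge_Min_div_card:
  assumes "finite F" "F \<noteq> {}" "\<And>p. p \<in> F \<Longrightarrow> A p \<in> events" "AE \<omega> in M. \<exists>p\<in>F. \<omega> \<in> A p"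
    and "\<And>p. p \<in> F \<Longrightarrow> 0 \<le> Q p" "\<And>p. p \<in> F \<Longrightarrow> Q p * prob (A p) \<le> prob S"
  shows "Min (Q ` F) / card F \<le> prob S"
proof -
  obtain p where p: "p \<in> F" "1 / card F \<le> prob (A p)"
    using exists_prob_ge_inverse_card[OF assms(1-4)] by blast
  have "Min (Q ` F) / card F \<le> Q p * (1 / card F)"
    using p(1) assms(1) by (simp add: divide_right_mono)
  also have "\<dots> \<le> Q p * prob (A p)"
    using p assms(5) by (intro mult_left_mono) auto
  also have "\<dots> \<le> prob S"
    using p(1) assms(6) by blast
  finally show ?thesis .
qed

lemma (in prob_space) prob_past_and_future:
  fixes z :: "nat \<Rightarrow> 'a \<Rightarrow> 'b::topological_space" and g :: "(nat \<Rightarrow> 'b) \<Rightarrow> 'c::topological_space"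
  assumes indep: "indep_vars (\<lambda>_. borel) z UNIV"
    and g: "g \<in> borel_measurable (PiM {..<n} (\<lambda>_. borel))"
    and A: "A \<in> sets borel" and C: "\<And>m. m < K \<Longrightarrow> C m \<in> sets borel"
  shows "prob {\<omega> \<in> space M. g (restrict (\<lambda>i. z i \<omega>) {..<n}) \<in> A \<and> (\<forall>m<K. z (n + m) \<omega> \<in> C m)}
    = prob {\<omega> \<in> space M. g (restrict (\<lambda>i. z i \<omega>) {..<n}) \<in> A} * (\<Prod>m<K. prob (z (n + m) -` C m \<inter> space M))"
proof (cases "K = 0")
  case False
  define I where "I = (+) n ` {..<K}"
  define Xa where "Xa = g -` A \<inter> space (PiM {..<n} (\<lambda>_. borel :: 'b measure))"
  define Xb where "Xb = PiE I (\<lambda>i. C (i - n))"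
  have sets: "Xa \<in> sets (PiM {..<n} (\<lambda>_. borel))" "Xb \<in> sets (PiM I (\<lambda>_. borel))"
    using g A C by (auto simp: Xa_def Xb_def I_def intro!: sets_PiM_I_finite)
  have "indep_var (PiM {..<n} (\<lambda>_. borel)) (\<lambda>\<omega>. restrict (\<lambda>i. z i \<omega>) {..<n})
      (PiM I (\<lambda>_. borel)) (\<lambda>\<omega>. restrict (\<lambda>i. z i \<omega>) I)"
    by (rule indep_var_restrict[OF indep]) (auto simp: I_def)
  note product = indep_varD[OF this sets]
  have "(\<lambda>\<omega>. (restrict (\<lambda>i. z i \<omega>) {..<n}, restrict (\<lambda>i. z i \<omega>) I)) -` (Xa \<times> Xb) \<inter> space M
      = {\<omega> \<in> space M. g (restrict (\<lambda>i. z i \<omega>) {..<n}) \<in> A \<and> (\<forall>m<K. z (n + m) \<omega> \<in> C m)}"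
    by (force simp: Xa_def Xb_def I_def space_PiM Pi_iff)
  moreover have "(\<lambda>\<omega>. restrict (\<lambda>i. z i \<omega>) {..<n}) -` Xa \<inter> space M
      = {\<omega> \<in> space M. g (restrict (\<lambda>i. z i \<omega>) {..<n}) \<in> A}"
    by (auto simp: Xa_def space_PiM)
  moreover have "(\<lambda>\<omega>. restrict (\<lambda>i. z i \<omega>) I) -` Xb \<inter> space M = (\<Inter>i\<in>I. z i -` C (i - n) \<inter> space M)"
    using False by (force simp: Xb_def I_def Pi_iff)
  ultimately have "prob {\<omega> \<in> space M. g (restrict (\<lambda>i. z i \<omega>) {..<n}) \<in> A \<and> (\<forall>m<K. z (n + m) \<omega> \<in> C m)}
      = prob {\<omega> \<in> space M. g (restrict (\<lambda>i. z i \<omega>) {..<n}) \<in> A} * prob (\<Inter>i\<in>I. z i -` C (i - n) \<inter> space M)"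
    using product by simp
  also have "prob (\<Inter>i\<in>I. z i -` C (i - n) \<inter> space M) = (\<Prod>i\<in>I. prob (z i -` C (i - n) \<inter> space M))"
    using False C by (intro indep_varsD[OF indep]) (auto simp: I_def)
  also have "\<dots> = (\<Prod>m<K. prob (z (n + m) -` C m \<inter> space M))"
    by (simp add: I_def prod.reindex)
  finally show ?thesis .
qed simp

lemma (in prob_space) prob_kme_state_and_future:
  fixes z :: "nat \<Rightarrow> 'a \<Rightarrow> 'b::euclidean_space" and lam k x0 w0 n j
  assumes indep: "indep_vars (\<lambda>_. borel) z UNIV"
    and same_law: "\<And>m B. B \<in> sets borel \<Longrightarrow> prob (z m -` B \<inter> space M) = prob (z 0 -` B \<inter> space M)"
    and A: "A \<in> sets borel" and C: "\<And>m. m < K \<Longrightarrow> C m \<in> sets borel"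
  defines "X \<equiv> \<lambda>\<omega>. fst (kme_state lam k x0 w0 (\<lambda>m. z m \<omega>) n) j"
  shows "prob {\<omega> \<in> space M. X \<omega> \<in> A \<and> (\<forall>m<K. z (n + m) \<omega> \<in> C m)}
    = prob {\<omega> \<in> space M. X \<omega> \<in> A} * (\<Prod>m<K. prob (z 0 -` C m \<inter> space M))"
proof -
  define g where "g = (\<lambda>h. fst (kme_state lam k x0 w0 h n) j)"
  have g_meas: "g \<in> borel_measurable (PiM {..<n} (\<lambda>_. borel))"
    using measurable_kme_state[of n "\<lambda>m h. h m" "PiM {..<n} (\<lambda>_. borel)" lam k x0 w0 j]
    by (simp add: g_def)
  have X_past: "X \<omega> = g (restrict (\<lambda>i. z i \<omega>) {..<n})" for \<omega>
    unfolding X_def g_def by (rule arg_cong[where f = "\<lambda>s. fst s j"], rule kme_state_cong) simp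
  have "(\<Prod>m<K. prob (z (n + m) -` C m \<inter> space M)) = (\<Prod>m<K. prob (z 0 -` C m \<inter> space M))"
    using C by (intro prod.cong refl same_law) simp
  with prob_past_and_future[where K = K and C = C, OF indep g_meas A C] show ?thesis
    by (simp add: X_past)
qed

context kme_weight_bound
begin

lemma kme_escape_probability_lower_bound:
  fixes M :: "'w measure" and E :: "'a::euclidean_space set" and z :: "nat \<Rightarrow> 'w \<Rightarrow> 'a"
  assumes M: "prob_space M" and E: "compact E" "convex E" "interior E \<noteq> {}"
    and f_pos: "\<And>x. x \<in> E \<Longrightarrow> 0 < f x" and f_zero: "\<And>x. x \<notin> E \<Longrightarrow> f x = 0"
    and bounded: "weights_bounded W k (x0, w0)" and x0: "\<And>i. i \<in> {1..k} \<Longrightarrow> x0 i \<in> E"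
    and indep: "prob_space.indep_vars M (\<lambda>_. borel) z UNIV"
    and distr: "\<And>n. distributed M lborel (z n) (\<lambda>x. ennreal (f x))"
    and j: "j \<in> {1..k}"
  defines "X \<equiv> \<lambda>n \<omega>. fst (kme_state lam k x0 w0 (\<lambda>m. z m \<omega>) n) j"
  shows "\<exists>\<epsilon> c K. 0 < \<epsilon> \<and> 0 < c \<and>
    (\<forall>n. c \<le> measure M {\<omega> \<in> space M. \<exists>m\<le>K. \<epsilon> \<le> dist (X (n + m) \<omega>) (X n \<omega>)})"
proof -
  interpret prob_space M by fact
  obtain \<epsilon> \<delta> \<eta> \<tau> K where esc: "0 < \<epsilon>" "0 < \<delta>" "0 < \<eta>" "\<And>p m. p \<in> E \<Longrightarrow> \<tau> p m \<in> E"
    and escape: "\<And>x0 w0 zs n p. weights_bounded W k (x0, w0) \<Longrightarrow> p \<in> E \<Longrightarrow>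
      dist (fst (kme_state lam k x0 w0 zs n) j) p < \<delta> \<Longrightarrow>
      (\<And>m. m < K \<Longrightarrow> dist (zs (n + m)) (\<tau> p m) < \<eta>) \<Longrightarrow>
      \<exists>m\<le>K. \<epsilon> \<le> dist (fst (kme_state lam k x0 w0 zs (n + m)) j) (fst (kme_state lam k x0 w0 zs n) j)"
    by (rule kme_escape_pattern[OF E(2,3) j]) blast
  have [measurable]: "z m \<in> borel_measurable M" for m
    using indep unfolding indep_vars_def by auto
  have [measurable]: "X n \<in> borel_measurable M" for n
    using measurable_kme_state[of n z M lam k x0 w0 j] unfolding X_def by simp
  have same_law: "prob (z m -` B \<inter> space M) = prob (z 0 -` B \<inter> space M)" if "B \<in> sets borel" for m B
    using distributed_emeasure[OF distr[of m], of B] distributed_emeasure[OF distr[of 0], of B] that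
    by (simp add: measure_def)
  have closed_E: "closed E"
    using E(1) by (rule compact_imp_closed)
  obtain F where F: "F \<subseteq> E" "finite F" "E \<subseteq> (\<Union>p\<in>F. ball p \<delta>)"
    by (rule compactE_image[OF E(1), of E "\<lambda>p. ball p \<delta>"]) (use esc(2) in auto)
  have "F \<noteq> {}"
    using F(3) E(3) interior_subset by blast
  define Q where "Q p = (\<Prod>m<K. prob (z 0 -` ball (\<tau> p m) \<eta> \<inter> space M))" for p
  have Q_pos: "0 < Q p" if "p \<in> E" for p
    using distributed_ball_pos[OF distr E(2,3) f_pos esc(4)[OF that] esc(3)]
    unfolding Q_def by (intro prod_pos) (simp add: emeasure_eq_measure)
  have cell: "Q p * prob {\<omega> \<in> space M. X n \<omega> \<in> ball p \<delta>}
      \<le> measure M {\<omega> \<in> space M. \<exists>m\<le>K. \<epsilon> \<le> dist (X (n + m) \<omega>) (X n \<omega>)}" if "p \<in> E" for n p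
  proof -
    have "Q p * prob {\<omega> \<in> space M. X n \<omega> \<in> ball p \<delta>}
        = prob {\<omega> \<in> space M. X n \<omega> \<in> ball p \<delta> \<and> (\<forall>m<K. z (n + m) \<omega> \<in> ball (\<tau> p m) \<eta>)}"
      using prob_kme_state_and_future[OF indep same_law, of "ball p \<delta>" K "\<lambda>m. ball (\<tau> p m) \<eta>"]
      by (simp add: Q_def X_def mult.commute)
    also have "\<dots> \<le> measure M {\<omega> \<in> space M. \<exists>m\<le>K. \<epsilon> \<le> dist (X (n + m) \<omega>) (X n \<omega>)}"
    proof (rule finite_measure_mono)
      show "{\<omega> \<in> space M. X n \<omega> \<in> ball p \<delta> \<and> (\<forall>m<K. z (n + m) \<omega> \<in> ball (\<tau> p m) \<eta>)}
          \<subseteq> {\<omega> \<in> space M. \<exists>m\<le>K. \<epsilon> \<le> dist (X (n + m) \<omega>) (X n \<omega>)}"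
        using escape[OF bounded that] unfolding X_def by (force simp: dist_commute)
    qed measurable
    finally show ?thesis .
  qed
  have covered: "AE \<omega> in M. \<exists>p\<in>F. \<omega> \<in> {\<omega> \<in> space M. X n \<omega> \<in> ball p \<delta>}" for n
  proof -
    have "AE \<omega> in M. z m \<omega> \<in> E" for m
      using distributed_AE_in[OF distr closed_E f_zero] .
    from AE_fst_kme_state_in[OF bounded E(2) x0 this j]
    have "AE \<omega> in M. X n \<omega> \<in> E"
      unfolding X_def .
    with AE_space show ?thesis
      by eventually_elim (use F(3) in blast)
  qed
  have "0 < Min (Q ` F)"
    using F Q_pos \<open>F \<noteq> {}\<close> by (subst Min_gr_iff) auto
  then have "0 < Min (Q ` F) / card F"
    using F(2) \<open>F \<noteq> {}\<close> by (simp add: card_gt_0_iff)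
  moreover have "Min (Q ` F) / card F \<le> measure M {\<omega> \<in> space M. \<exists>m\<le>K. \<epsilon> \<le> dist (X (n + m) \<omega>) (X n \<omega>)}" for n
    by (rule prob_ge_Min_div_card[OF F(2) \<open>F \<noteq> {}\<close> _ covered])
      (use F(1) Q_pos cell in \<open>auto intro: less_imp_le\<close>)
  ultimately show ?thesis
    using esc(1) by (intro exI[of _ \<epsilon>] exI[of _ "Min (Q ` F) / card F"] exI[of _ K]) simp
qed

end

lemma exists_kme_weight_bound:
  assumes "1 \<le> k" "0 < lam" "\<And>i. i \<in> {1..k} \<Longrightarrow> 0 < w0 i"
  obtains W where "kme_weight_bound lam k W" "weights_bounded W k (x0, w0)"
proof
  define W where "W = max (Max (w0 ` {1..k})) (1 / (1 - exp (- lam)))"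
  have "0 < 1 - exp (- lam)"
    using assms(2) by simp
  moreover have "1 / (1 - exp (- lam)) \<le> W"
    by (simp add: W_def)
  ultimately have "1 \<le> W * (1 - exp (- lam))"
    by (simp add: divide_simps)
  then show "kme_weight_bound lam k W"
    using assms(1,2) by unfold_locales
  show "weights_bounded W k (x0, w0)"
    using assms(3) by (force simp: weights_bounded_def W_def intro: max.coboundedI1)
qed

theorem corollary1:
  fixes M :: "'w measure"
    and E :: "'a::euclidean_space set"
    and f :: "'a \<Rightarrow> real"
    and k :: nat and lam :: real
    and x0 :: "nat \<Rightarrow> 'a" and w0 :: "nat \<Rightarrow> real"
    and z :: "nat \<Rightarrow> 'w \<Rightarrow> 'a"
  assumes "prob_space M"
    and "bounded E" and "convex E" and "closed E" and "interior E \<noteq> {}"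
    and "\<And>x. x \<in> E \<Longrightarrow> f x > 0"
    and "\<And>x. x \<notin> E \<Longrightarrow> f x = 0"
    and "k \<ge> 2" and "lam > 0"
    and "\<And>i. i \<in> {1..k} \<Longrightarrow> x0 i \<in> E"
    and "\<And>i j. i \<in> {1..k} \<Longrightarrow> j \<in> {1..k} \<Longrightarrow> i \<noteq> j \<Longrightarrow> x0 i \<noteq> x0 j"
    and "\<And>i. i \<in> {1..k} \<Longrightarrow> w0 i > 0"
    and "prob_space.indep_vars M (\<lambda>_. borel) z UNIV"
    and "\<And>n. distributed M lborel (z n) (\<lambda>x. ennreal (f x))"
    and "j \<in> {1..k}"
  shows "\<not> (\<exists>Y. Y \<in> borel_measurable M \<and>
              conv_in_prob M (\<lambda>n \<omega>. fst (kme_state lam k x0 w0 (\<lambda>m. z m \<omega>) n) j) Y)"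
proof
  define X where "X = (\<lambda>n \<omega>. fst (kme_state lam k x0 w0 (\<lambda>m. z m \<omega>) n) j)"
  assume "\<exists>Y. Y \<in> borel_measurable M \<and> conv_in_prob M X Y"
  then obtain Y where Y: "Y \<in> borel_measurable M" "conv_in_prob M X Y"
    by blast
  obtain W where W: "kme_weight_bound lam k W" "weights_bounded W k (x0, w0)"
    using exists_kme_weight_bound[of k lam w0 x0, OF order_trans[OF one_le_numeral assms(8)] assms(9,12)]
    by blast
  have "compact E"
    using assms(2,4) by (simp add: compact_eq_bounded_closed)
  have "\<exists>\<epsilon> c K. 0 < \<epsilon> \<and> 0 < c \<and>
      (\<forall>n. c \<le> measure M {\<omega> \<in> space M. \<exists>m\<le>K. \<epsilon> \<le> dist (X (n + m) \<omega>) (X n \<omega>)})"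
    unfolding X_def
    by (rule kme_weight_bound.kme_escape_probability_lower_bound[OF W(1) assms(1) \<open>compact E\<close>
      assms(3,5,6,7) W(2) assms(10,13,14,15)])
  then obtain \<epsilon> c K where "0 < \<epsilon>" "0 < c"
    and lower: "\<And>n. c \<le> measure M {\<omega> \<in> space M. \<exists>m\<le>K. \<epsilon> \<le> dist (X (n + m) \<omega>) (X n \<omega>)}"
    by blast
  have "z m \<in> borel_measurable M" for m
    using assms(13) unfolding prob_space.indep_vars_def[OF assms(1)] by blast
  then have "\<And>n. X n \<in> borel_measurable M"
    using measurable_kme_state unfolding X_def by blast
  then have "(\<lambda>n. measure M {\<omega> \<in> space M. \<exists>m\<le>K. \<epsilon> \<le> dist (X (n + m) \<omega>) (X n \<omega>)}) \<longlonglongrightarrow> 0"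
    using conv_in_prob_increments_vanish[OF assms(1) Y(2) _ Y(1) \<open>0 < \<epsilon>\<close>] by blast
  then have "c \<le> 0"
    by (rule LIMSEQ_le_const) (use lower in blast)
  with \<open>0 < c\<close> show False
    by simp
qed

end
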